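(* Fix $\delta>0$ and a sequence $(T_N)_N$ with $T_N\in2\mathbb N$, $T_N\le N$, $T_N\to\infty$. Set $K_N(n):=\mathcal P_{\delta,T_N}(\tau_1=n)$ and $a_N:=\lfloor\sqrt{T_N}\rfloor/2$. For every $\eta>0$ there exists $N_1=N_1(\eta)$ such that for all $N\ge N_1$ and all integers $0\le t\le N-\lfloor\sqrt{T_N}\rfloor$, $$\sum_{r\in\mathbb N,\ r\ge t+a_N}K_N(r)\;\le\;\eta\sum_{r\in\mathbb N,\ t+1\le r\le t+a_N}K_N(r).$$
   Context: $(S_n)$ is the simple symmetric random walk on $\mathbb Z$ started at $0$ with law $\mathbf P$. For $T\in2\mathbb N$, $\tau_1^T:=\inf\{n>0:S_n\in T\mathbb Z\}$, $q_T(n):=\mathbf P(\tau^T_1=n)$, $Q_T(\lambda):=\mathbf E[e^{-\lambda\tau^T_1}]$; for $\delta>0$, $\phi(\delta,T)$ is the unique real solution $\lambda$ of $Q_T(\lambda)=e^{-\delta}$. Under $\mathcal P_{\delta,T}$, $\tau_1$ is $\mathbb N$-valued with $\mathcal P_{\delta,T}(\tau_1=n)=e^\delta q_T(n)e^{-\phi(\delta,T)n}$. *)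

theory Defs
  imports "HOL-Analysis.Analysis"
begin

text \<open>Step sequences of length n of the simple symmetric random walk that hit
  T*Z for the first time (after time 0) exactly at time n. Partial sums
  sum_list (take k xs) are the positions S_k.\<close>
definition first_hit_paths :: "nat \<Rightarrow> nat \<Rightarrow> int list set" where
  "first_hit_paths T n = {xs. xs \<in> lists {-1, 1} \<and> length xs = n \<and> 0 < n \<and>
      int T dvd sum_list (take n xs) \<and>
      (\<forall>k. 0 < k \<and> k < n \<longrightarrow> \<not> int T dvd sum_list (take k xs))}"

definition q :: "nat \<Rightarrow> nat \<Rightarrow> real" where
  "q T n = real (card (first_hit_paths T n)) / 2 ^ n"

definition phi :: "real \<Rightarrow> nat \<Rightarrow> real" where
  "phi \<delta> T = (THE l. summable (\<lambda>n. q T n * exp (- l * real n)) \<and>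
                     (\<Sum>n. q T n * exp (- l * real n)) = exp (- \<delta>))"

definition Kdist :: "real \<Rightarrow> nat \<Rightarrow> nat \<Rightarrow> real" where
  "Kdist \<delta> T n = exp \<delta> * q T n * exp (- phi \<delta> T * real n)"

end

theory Submission
  imports Defs
begin

(* The proof rests on two properties of the law q_T of the first hitting time of T*Z
   by the simple random walk, both obtained by counting walks that stay inside the
   open interval (0,T):

   (1) Monotonicity. q_T(m+2) = c_T(m) / 2^(m+1), where c_T(m) counts m-step walks
       from 1 to 1 or to T-1 inside (0,T).  Writing c_T(2i) as half the squared norm
       of a vector u_i with u_(i+1)(y) = u_i(y-1) + u_i(y+1) gives c_T(2i+2) <= 4 c_T(2i),
       i.e. q_T is non-increasing along even times; for even T it vanishes at odd times.

   (2) A uniform lower bound on phi.  The survival probability s_T(j) (no hit in the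
       first j+1 steps) satisfies s_T(j)^2 <= 2 (j+1) q_T(2j+2) by Cauchy-Schwarz;
       summing over j gives s_T(J)^2 * H_J <= 2, uniformly in T.  Hence q_T puts mass
       at least exp(-delta/2) on [0, J+2) for a J independent of T, which forces
       phi(delta,T) >= l0 > 0 for all T >= 4.

   With r0 the first even time after t, (1) gives K(r) <= K(r0) exp(-phi (r - r0)) for
   r >= r0, so the tail beyond t + a is at most K(r0) exp(-l0 (a-2)) / (1 - exp(-l0)),
   and K(r0) is a term of the window sum.  As a_N -> infinity the factor drops below eta. *)


section \<open>Walks confined to the open interval (0,T)\<close>

definition inside_walk :: "int \<Rightarrow> int \<Rightarrow> int list \<Rightarrow> bool" where
  "inside_walk T x ys \<longleftrightarrow>
     (\<forall>k\<le>length ys. 0 < x + sum_list (take k ys) \<and> x + sum_list (take k ys) < T)"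

definition inside_walks :: "int \<Rightarrow> nat \<Rightarrow> int \<Rightarrow> int \<Rightarrow> int list set" where
  "inside_walks T j x y =
     {ys. ys \<in> lists {-1,1} \<and> length ys = j \<and> inside_walk T x ys \<and> x + sum_list ys = y}"

text \<open>The number of j-step walks from x to y inside (0,T): the matrix entries of the
  j-th power of the adjacency matrix of the path 1 - 2 - ... - (T-1).\<close>
definition nwalks :: "int \<Rightarrow> nat \<Rightarrow> int \<Rightarrow> int \<Rightarrow> nat" where
  "nwalks T j x y = card (inside_walks T j x y)"

lemma finite_inside_walks: "finite (inside_walks T j x y)"
proof -
  have "inside_walks T j x y \<subseteq> {xs. set xs \<subseteq> {-1,1} \<and> length xs = j}"
    unfolding inside_walks_def by auto
  moreover have "finite {xs. set xs \<subseteq> ({-1,1}::int set) \<and> length xs = j}"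
    by (rule finite_lists_length_eq) simp
  ultimately show ?thesis by (rule finite_subset)
qed

lemma inside_walk_snoc:
  "inside_walk T x (ys @ [s]) \<longleftrightarrow>
     inside_walk T x ys \<and> 0 < x + sum_list ys + s \<and> x + sum_list ys + s < T"
proof
  assume a: "inside_walk T x (ys @ [s])"
  have "inside_walk T x ys" unfolding inside_walk_def
  proof (intro allI impI)
    fix k assume "k \<le> length ys"
    then show "0 < x + sum_list (take k ys) \<and> x + sum_list (take k ys) < T"
      using a[unfolded inside_walk_def, rule_format, of k] by simp
  qed
  moreover have "0 < x + sum_list ys + s \<and> x + sum_list ys + s < T"
    using a[unfolded inside_walk_def, rule_format, of "Suc (length ys)"] by (simp add: add.assoc)
  ultimately show "inside_walk T x ys \<and> 0 < x + sum_list ys + s \<and> x + sum_list ys + s < T"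
    by blast
next
  assume a: "inside_walk T x ys \<and> 0 < x + sum_list ys + s \<and> x + sum_list ys + s < T"
  show "inside_walk T x (ys @ [s])" unfolding inside_walk_def
  proof (intro allI impI)
    fix k assume k: "k \<le> length (ys @ [s])"
    show "0 < x + sum_list (take k (ys @ [s])) \<and> x + sum_list (take k (ys @ [s])) < T"
    proof (cases "k \<le> length ys")
      case True
      then show ?thesis using a[THEN conjunct1, unfolded inside_walk_def, rule_format, of k] by simp
    next
      case False
      then have "k = Suc (length ys)" using k by simp
      then show ?thesis using a by (simp add: add.assoc)
    qed
  qed
qed

lemma inside_walks_0:
  "inside_walks T 0 x y = (if x = y \<and> 0 < x \<and> x < T then {[]} else {})"
  by (auto simp: inside_walks_def inside_walk_def)

lemma inside_walks_Suc:
  "inside_walks T (Suc j) x y = (if 0 < y \<and> y < T then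
     (\<lambda>ys. ys @ [1]) ` inside_walks T j x (y - 1) \<union> (\<lambda>ys. ys @ [-1]) ` inside_walks T j x (y + 1)
   else {})"
proof (cases "0 < y \<and> y < T")
  case True
  show ?thesis
  proof (rule set_eqI, rule iffI)
    fix zs assume "zs \<in> inside_walks T (Suc j) x y"
    then have z: "zs \<in> lists {-1,1}" "length zs = Suc j" "inside_walk T x zs" "x + sum_list zs = y"
      by (auto simp: inside_walks_def)
    then obtain ys s where zs: "zs = ys @ [s]" by (metis length_Suc_conv_rev)
    have "s = 1 \<or> s = -1" using z(1) zs by auto
    moreover have "ys \<in> lists {-1,1}" "length ys = j" "inside_walk T x ys"
      using z zs inside_walk_snoc by auto
    ultimately show "zs \<in> (if 0 < y \<and> y < T then
        (\<lambda>ys. ys @ [1]) ` inside_walks T j x (y - 1) \<union> (\<lambda>ys. ys @ [-1]) ` inside_walks T j x (y + 1)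
      else {})"
      using z(4) True unfolding zs by (auto simp: inside_walks_def)
  qed (use True in \<open>auto simp: inside_walks_def inside_walk_snoc\<close>)
qed (auto simp: inside_walks_def inside_walk_def)

lemma nwalks_0: "nwalks T 0 x y = (if x = y \<and> 0 < x \<and> x < T then 1 else 0)"
  by (simp add: nwalks_def inside_walks_0)

lemma nwalks_Suc:
  "nwalks T (Suc j) x y =
     (if 0 < y \<and> y < T then nwalks T j x (y - 1) + nwalks T j x (y + 1) else 0)"
proof (cases "0 < y \<and> y < T")
  case True
  have "card ((\<lambda>ys. ys @ [1]) ` inside_walks T j x (y - 1) \<union> (\<lambda>ys. ys @ [-1]) ` inside_walks T j x (y + 1))
     = card ((\<lambda>ys. ys @ [1]) ` inside_walks T j x (y - 1))
       + card ((\<lambda>ys. ys @ [-1::int]) ` inside_walks T j x (y + 1))"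
    by (rule card_Un_disjoint) (auto simp: finite_inside_walks)
  also have "\<dots> = nwalks T j x (y - 1) + nwalks T j x (y + 1)"
    unfolding nwalks_def by (subst card_image, simp add: inj_on_def)+ simp
  finally show ?thesis using True by (simp add: nwalks_def inside_walks_Suc)
next
  case False
  then have "inside_walks T (Suc j) x y = {}" by (subst inside_walks_Suc) (use False in auto)
  then show ?thesis using False unfolding nwalks_def by auto
qed

lemma nwalks_outside: "\<not> (0 < y \<and> y < T) \<Longrightarrow> nwalks T j x y = 0"
  by (cases j) (auto simp: nwalks_0 nwalks_Suc)

lemma nwalks_Suc_left:
  "nwalks T (Suc j) x y =
     (if 0 < x \<and> x < T then nwalks T j (x - 1) y + nwalks T j (x + 1) y else 0)"
proof (induction j arbitrary: x y)
  case 0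
  then show ?case by (auto simp: nwalks_Suc nwalks_0)
next
  case (Suc j)
  have l: "nwalks T (Suc j) x (y - 1) =
      (if 0 < x \<and> x < T then nwalks T j (x - 1) (y - 1) + nwalks T j (x + 1) (y - 1) else 0)"
    "nwalks T (Suc j) x (y + 1) =
      (if 0 < x \<and> x < T then nwalks T j (x - 1) (y + 1) + nwalks T j (x + 1) (y + 1) else 0)"
    using Suc.IH by blast+
  have r: "nwalks T (Suc j) (x - 1) y =
      (if 0 < y \<and> y < T then nwalks T j (x - 1) (y - 1) + nwalks T j (x - 1) (y + 1) else 0)"
    "nwalks T (Suc j) (x + 1) y =
      (if 0 < y \<and> y < T then nwalks T j (x + 1) (y - 1) + nwalks T j (x + 1) (y + 1) else 0)"
    by (rule nwalks_Suc)+
  show ?case by (subst nwalks_Suc) (simp only: l r, auto)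
qed

lemma nwalks_sym: "nwalks T j x y = nwalks T j y x"
proof (induction j arbitrary: x y)
  case 0
  then show ?case by (auto simp: nwalks_0)
next
  case (Suc j)
  have "nwalks T (Suc j) y x =
      (if 0 < y \<and> y < T then nwalks T j (y - 1) x + nwalks T j (y + 1) x else 0)"
    by (rule nwalks_Suc_left)
  then show ?case by (simp add: nwalks_Suc Suc.IH[of "y - 1" x] Suc.IH[of "y + 1" x])
qed

lemma nwalks_reflect: "nwalks T j x y = nwalks T j (T - x) (T - y)"
proof (induction j arbitrary: y)
  case 0
  then show ?case by (auto simp: nwalks_0)
next
  case (Suc j)
  have a: "T - y - 1 = T - (y + 1)" "T - y + 1 = T - (y - 1)" by simp_all
  show ?case by (simp add: nwalks_Suc Suc.IH a)
qed

lemma nwalks_parity: "odd (int j + x + y) \<Longrightarrow> nwalks T j x y = 0"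
proof (induction j arbitrary: y)
  case 0
  then show ?case by (auto simp: nwalks_0)
next
  case (Suc j)
  have "odd (int j + x + (y - 1))" "odd (int j + x + (y + 1))" using Suc.prems by presburger+
  then show ?case by (simp add: nwalks_Suc Suc.IH)
qed

lemma nwalks_far: "y > x + int j \<Longrightarrow> nwalks T j x y = 0"
  by (induction j arbitrary: y) (auto simp: nwalks_0 nwalks_Suc)

lemma nwalks_add:
  "nwalks T (a + b) x y = (\<Sum>z\<in>{1..T-1}. nwalks T a x z * nwalks T b z y)"
proof (induction b arbitrary: y)
  case 0
  have "(\<Sum>z\<in>{1..T-1}. nwalks T a x z * nwalks T 0 z y)
      = (\<Sum>z\<in>{1..T-1}. if z = y then nwalks T a x y else 0)"
    by (rule sum.cong) (auto simp: nwalks_0)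
  also have "\<dots> = nwalks T a x y" using nwalks_outside[of y T a x] by simp
  finally show ?case by simp
next
  case (Suc b)
  have "nwalks T (a + Suc b) x y =
      (if 0 < y \<and> y < T then nwalks T (a+b) x (y - 1) + nwalks T (a+b) x (y + 1) else 0)"
    by (simp add: nwalks_Suc)
  also have "\<dots> = (\<Sum>z\<in>{1..T-1}. nwalks T a x z * nwalks T (Suc b) z y)"
    by (simp add: Suc.IH nwalks_Suc sum.distrib[symmetric] algebra_simps; auto)
  finally show ?case .
qed

lemma nwalks_square_sum:
  "(\<Sum>x\<in>{1..T-1}. nwalks T i a x * nwalks T i x b) = nwalks T (2*i) a b"
  using nwalks_add[of T i i a b] by (simp add: mult_2)

lemma sum_shift_int: "(\<Sum>y\<in>{a..b::int}. f (y + k)) = (\<Sum>z\<in>{a+k..b+k}. f z)"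
  by (rule sum.reindex_bij_witness[where i="\<lambda>z. z - k" and j="\<lambda>y. y + k"]) auto


section \<open>Walks about to exit, survivors, and the two key estimates\<close>

text \<open>Walks from 1 ending next to the boundary; each extends by one step into T*Z.\<close>
definition exit_walks :: "int \<Rightarrow> nat \<Rightarrow> nat" where
  "exit_walks T j = nwalks T j 1 1 + nwalks T j 1 (T - 1)"

definition survivors :: "int \<Rightarrow> nat \<Rightarrow> nat" where
  "survivors T j = (\<Sum>x\<in>{1..T-1}. nwalks T j 1 x)"

definition folded_walks :: "int \<Rightarrow> nat \<Rightarrow> int \<Rightarrow> nat" where
  "folded_walks T i x = nwalks T i 1 x + nwalks T i 1 (T - x)"

lemma folded_walks_norm: "(\<Sum>x\<in>{1..T-1}. (folded_walks T i x)^2) = 2 * exit_walks T (2*i)"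
proof -
  have e: "(folded_walks T i x)^2 = nwalks T i 1 x * nwalks T i x 1
       + 2 * (nwalks T i 1 x * nwalks T i x (T - 1)) + nwalks T i (T - 1) x * nwalks T i x (T - 1)"
    for x
  proof -
    have "nwalks T i 1 (T - x) = nwalks T i x (T - 1)"
      using nwalks_reflect[of T i 1 "T - x"] nwalks_sym by simp
    moreover have "nwalks T i x 1 = nwalks T i 1 x" "nwalks T i (T - 1) x = nwalks T i x (T - 1)"
      by (rule nwalks_sym)+
    ultimately show ?thesis
      unfolding folded_walks_def by (simp add: power2_eq_square algebra_simps)
  qed
  have "nwalks T (2*i) (T - 1) (T - 1) = nwalks T (2*i) 1 1"
    using nwalks_reflect[of T "2*i" 1 1] by simp
  then show ?thesis
    by (simp add: e sum.distrib sum_distrib_left[symmetric] nwalks_square_sum exit_walks_def)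
qed

lemma folded_walks_Suc:
  "folded_walks T (Suc i) y =
     (if 0 < y \<and> y < T then folded_walks T i (y - 1) + folded_walks T i (y + 1) else 0)"
proof -
  have a: "T - y - 1 = T - (y + 1)" "T - y + 1 = T - (y - 1)" by simp_all
  show ?thesis unfolding folded_walks_def by (auto simp: nwalks_Suc a)
qed

lemma folded_walks_boundary: "folded_walks T i 0 = 0" "folded_walks T i T = 0"
  unfolding folded_walks_def by (auto simp: nwalks_outside)

text \<open>The neighbour-sum operator u \<mapsto> u(.-1) + u(.+1) with Dirichlet boundary has
  norm at most 2, since (a+b)^2 <= 2a^2 + 2b^2 and each shift is norm-decreasing.\<close>
lemma sum_sq_neighbours_le:
  fixes u :: "int \<Rightarrow> nat"
  assumes "u 0 = 0" "u T = 0" "T \<ge> 2"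
  shows "(\<Sum>y\<in>{1..T-1}. (u (y - 1) + u (y + 1))^2) \<le> 4 * (\<Sum>y\<in>{1..T-1}. (u y)^2)"
proof -
  have shift_down: "(\<Sum>y\<in>{1..T-1}. (u (y + -1))^2) \<le> (\<Sum>y\<in>{1..T-1}. (u y)^2)"
  proof -
    have "(\<Sum>y\<in>{1..T-1}. (u (y + -1))^2) = (\<Sum>y\<in>{0..T-2}. (u y)^2)"
      by (subst sum_shift_int[of "\<lambda>z. (u z)^2"]) simp
    also have "\<dots> = (\<Sum>y\<in>{1..T-2}. (u y)^2)"
    proof -
      have "{0..T-2} = insert 0 {1..T-2}" using assms by auto
      then show ?thesis using assms by simp
    qed
    also have "\<dots> \<le> (\<Sum>y\<in>{1..T-1}. (u y)^2)" by (rule sum_mono2) auto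
    finally show ?thesis .
  qed
  have shift_up: "(\<Sum>y\<in>{1..T-1}. (u (y + 1))^2) \<le> (\<Sum>y\<in>{1..T-1}. (u y)^2)"
  proof -
    have "(\<Sum>y\<in>{1..T-1}. (u (y + 1))^2) = (\<Sum>y\<in>{2..T}. (u y)^2)"
      by (subst sum_shift_int[of "\<lambda>z. (u z)^2"]) simp
    also have "\<dots> = (\<Sum>y\<in>{2..T-1}. (u y)^2)"
    proof -
      have "{2..T} = insert T {2..T-1}" using assms by auto
      then show ?thesis using assms by simp
    qed
    also have "\<dots> \<le> (\<Sum>y\<in>{1..T-1}. (u y)^2)" by (rule sum_mono2) auto
    finally show ?thesis .
  qed
  have "(\<Sum>y\<in>{1..T-1}. (u (y - 1) + u (y + 1))^2)
      \<le> (\<Sum>y\<in>{1..T-1}. 2 * (u (y - 1))^2 + 2 * (u (y + 1))^2)"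
  proof (rule sum_mono)
    fix y
    have "(int (u (y - 1)) + int (u (y + 1)))^2 \<le> 2 * (int (u (y - 1)))^2 + 2 * (int (u (y + 1)))^2"
      by (smt (verit) zero_le_power2 power2_diff power2_sum)
    then show "(u (y - 1) + u (y + 1))^2 \<le> 2 * (u (y - 1))^2 + 2 * (u (y + 1))^2"
      by (metis (mono_tags, lifting) of_nat_add of_nat_le_iff of_nat_mult of_nat_numeral of_nat_power)
  qed
  also have "\<dots> = 2 * (\<Sum>y\<in>{1..T-1}. (u (y + -1))^2) + 2 * (\<Sum>y\<in>{1..T-1}. (u (y + 1))^2)"
    by (simp add: sum.distrib sum_distrib_left)
  finally show ?thesis using shift_down shift_up by simp
qed

lemma exit_walks_step: assumes "T \<ge> 2" shows "exit_walks T (2*i + 2) \<le> 4 * exit_walks T (2*i)"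
proof -
  have "2 * exit_walks T (2 * Suc i) = (\<Sum>y\<in>{1..T-1}. (folded_walks T (Suc i) y)^2)"
    by (simp add: folded_walks_norm)
  also have "\<dots> = (\<Sum>y\<in>{1..T-1}. (folded_walks T i (y - 1) + folded_walks T i (y + 1))^2)"
    by (rule sum.cong) (auto simp: folded_walks_Suc)
  also have "\<dots> \<le> 4 * (\<Sum>y\<in>{1..T-1}. (folded_walks T i y)^2)"
    by (rule sum_sq_neighbours_le) (use assms folded_walks_boundary in auto)
  also have "\<dots> = 4 * (2 * exit_walks T (2*i))" by (simp add: folded_walks_norm)
  finally show ?thesis by simp
qed

text \<open>Each survivor has two continuations; exactly the exit walks lose one of them.\<close>
lemma survivors_Suc: assumes "T \<ge> 3" shows "survivors T (Suc j) + exit_walks T j = 2 * survivors T j"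
proof -
  have "survivors T (Suc j) =
      (\<Sum>y\<in>{1..T-1}. nwalks T j 1 (y + -1)) + (\<Sum>y\<in>{1..T-1}. nwalks T j 1 (y + 1))"
    unfolding survivors_def by (simp add: nwalks_Suc sum.distrib)
  also have "(\<Sum>y\<in>{1..T-1}. nwalks T j 1 (y + -1)) = (\<Sum>y\<in>{0..T-2}. nwalks T j 1 y)"
    by (subst sum_shift_int[of "\<lambda>z. nwalks T j 1 z"]) simp
  also have "(\<Sum>y\<in>{1..T-1}. nwalks T j 1 (y + 1)) = (\<Sum>y\<in>{2..T}. nwalks T j 1 y)"
    by (subst sum_shift_int[of "\<lambda>z. nwalks T j 1 z"]) simp
  finally have split: "survivors T (Suc j) =
      (\<Sum>y\<in>{0..T-2}. nwalks T j 1 y) + (\<Sum>y\<in>{2..T}. nwalks T j 1 y)" .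
  have a: "{0..T-2} = insert 0 {1..T-2}" "{1..T-1} = insert (T-1) {1..T-2}"
    "{2..T} = insert T {2..T-1}" "{1..T-1} = insert 1 {2..T-1}" using assms by auto
  have "(\<Sum>y\<in>{0..T-2}. nwalks T j 1 y) + nwalks T j 1 (T - 1) = survivors T j"
    unfolding survivors_def using assms by (subst a(2), subst a(1)) (simp add: nwalks_outside)
  moreover have "(\<Sum>y\<in>{2..T}. nwalks T j 1 y) + nwalks T j 1 1 = survivors T j"
    unfolding survivors_def using assms by (subst a(4), subst a(3)) (simp add: nwalks_outside)
  ultimately show ?thesis using split unfolding exit_walks_def by simp
qed

lemma survivors_0: "T \<ge> 2 \<Longrightarrow> survivors T 0 = 1"
proof -
  assume "T \<ge> 2"
  then have "{1..T-1} = insert 1 {2..T-1}" by auto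
  then show ?thesis unfolding survivors_def using \<open>T \<ge> 2\<close> by (simp add: nwalks_0)
qed

text \<open>Key estimate (2), Cauchy-Schwarz: a j-step walk from 1 ends in at most j+1 sites,
  and the squared counts sum to the number of 2j-step returns to 1.\<close>
lemma survivors_sq_le: "real (survivors T j)^2 \<le> real (j+1) * real (nwalks T (2*j) 1 1)"
proof -
  let ?J = "{1..min (T-1) (1 + int j)}"
  have "survivors T j = (\<Sum>x\<in>?J. nwalks T j 1 x)"
    unfolding survivors_def by (rule sum.mono_neutral_right) (auto simp: nwalks_far)
  then have "real (survivors T j)^2 = (\<Sum>x\<in>?J. real (nwalks T j 1 x))^2" by simp
  also have "\<dots> \<le> (\<Sum>x\<in>?J. (real (nwalks T j 1 x))^2) * card ?J"
    by (rule sum_squared_le_sum_of_squares)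
  also have "\<dots> \<le> (\<Sum>x\<in>{1..T-1}. (real (nwalks T j 1 x))^2) * real (j+1)"
  proof (rule mult_mono)
    show "(\<Sum>x\<in>?J. (real (nwalks T j 1 x))^2) \<le> (\<Sum>x\<in>{1..T-1}. (real (nwalks T j 1 x))^2)"
      by (rule sum_mono2) auto
    have "card ?J \<le> card {1..1 + int j}" by (rule card_mono) auto
    then show "real (card ?J) \<le> real (j+1)" by simp
  qed (auto intro: sum_nonneg)
  also have "(\<Sum>x\<in>{1..T-1}. (real (nwalks T j 1 x))^2) = real (nwalks T (2*j) 1 1)"
  proof -
    have "(\<Sum>x\<in>{1..T-1}. (real (nwalks T j 1 x))^2)
        = real (\<Sum>x\<in>{1..T-1}. nwalks T j 1 x * nwalks T j x 1)"
      by (simp add: power2_eq_square nwalks_sym[of T j _ 1])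
    then show ?thesis by (simp add: nwalks_square_sum)
  qed
  finally show ?thesis by (simp add: mult.commute)
qed


section \<open>First hitting paths as walks inside (0,T)\<close>

lemma first_hit_paths_short: "T \<ge> 2 \<Longrightarrow> n < 2 \<Longrightarrow> first_hit_paths T n = {}"
proof -
  assume T: "T \<ge> 2" and n: "n < 2"
  { fix xs assume xs: "xs \<in> first_hit_paths T n"
    then have "n = 1" using n by (auto simp: first_hit_paths_def)
    with xs obtain s where "xs = [s]" "s = 1 \<or> s = -1" "int T dvd s"
      by (auto simp: first_hit_paths_def length_Suc_conv)
    then have False using T by (auto dest: zdvd_imp_le) }
  then show ?thesis by blast
qed

lemma sum_take_map_uminus: "sum_list (take k (map uminus xs)) = - sum_list (take k (xs::int list))"
  by (induction xs arbitrary: k) (auto simp: take_Cons')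

lemma first_hit_paths_uminus: "xs \<in> first_hit_paths T n \<Longrightarrow> map uminus xs \<in> first_hit_paths T n"
  using sum_take_map_uminus[of "length xs" xs]
  unfolding first_hit_paths_def by (fastforce simp: sum_take_map_uminus)

lemma first_hit_prefix_inside:
  fixes xs :: "int list" and Ti :: int
  assumes xs: "xs \<in> lists {-1,1}" "length xs = n" and h: "hd xs = 1"
    and nd: "\<forall>k. 0 < k \<and> k < n \<longrightarrow> \<not> Ti dvd sum_list (take k xs)" and T2: "Ti \<ge> 2"
  shows "0 < k \<Longrightarrow> k < n \<Longrightarrow> 0 < sum_list (take k xs) \<and> sum_list (take k xs) < Ti"
proof (induction k)
  case 0
  then show ?case by simp
next
  case (Suc k)
  show ?case
  proof (cases k)
    case 0
    obtain a ys where "xs = a # ys" using Suc.prems xs by (cases xs) auto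
    then have "take (Suc k) xs = [1]" using h 0 by simp
    then show ?thesis using T2 by simp
  next
    case (Suc k')
    then have IH: "0 < sum_list (take k xs) \<and> sum_list (take k xs) < Ti"
      using Suc.IH Suc.prems by simp
    have kn: "k < length xs" using Suc.prems xs by simp
    have step: "sum_list (take (Suc k) xs) = sum_list (take k xs) + xs ! k"
      using kn by (simp add: take_Suc_conv_app_nth)
    have "xs ! k \<in> {-1,1}" using xs kn by (metis in_listsD nth_mem)
    moreover have "\<not> Ti dvd sum_list (take (Suc k) xs)" using nd Suc.prems by blast
    ultimately have "sum_list (take (Suc k) xs) \<noteq> 0" "sum_list (take (Suc k) xs) \<noteq> Ti"
      by auto
    then show ?thesis using IH step \<open>xs ! k \<in> {-1,1}\<close> by auto
  qed
qed

lemma not_dvd_inside: "0 < v \<Longrightarrow> v < (M::int) \<Longrightarrow> \<not> M dvd v"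
  using zdvd_imp_le by fastforce

lemma first_hit_paths_up:
  assumes T: "T \<ge> 4"
  shows "{xs \<in> first_hit_paths T (m+2). hd xs = 1} =
     (\<lambda>ys. 1 # ys @ [-1]) ` inside_walks (int T) m 1 1
     \<union> (\<lambda>ys. 1 # ys @ [1]) ` inside_walks (int T) m 1 (int T - 1)"
  (is "?L = ?R")
proof
  show "?L \<subseteq> ?R"
  proof
    fix xs assume "xs \<in> ?L"
    then have xs: "xs \<in> lists {-1,1}" "length xs = m+2" "int T dvd sum_list xs"
      "\<forall>k. 0 < k \<and> k < m+2 \<longrightarrow> \<not> int T dvd sum_list (take k xs)" "hd xs = 1"
      by (auto simp: first_hit_paths_def)
    obtain zs where zs: "xs = 1 # zs" using xs(2,5) by (cases xs) auto
    have "length zs = Suc m" using zs xs(2) by simp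
    then obtain ys s where zs2: "zs = ys @ [s]" by (metis length_Suc_conv_rev)
    have ly: "length ys = m" using zs zs2 xs(2) by simp
    have s: "s = 1 \<or> s = -1" and ysl: "ys \<in> lists {-1,1}" using xs(1) zs zs2 by auto
    have ins: "0 < k \<Longrightarrow> k < m+2 \<Longrightarrow> 0 < sum_list (take k xs) \<and> sum_list (take k xs) < int T" for k
      using first_hit_prefix_inside[OF xs(1) xs(2) xs(5) xs(4)] T by simp
    have ok: "inside_walk (int T) 1 ys" unfolding inside_walk_def
    proof (intro allI impI)
      fix k assume "k \<le> length ys"
      then show "0 < 1 + sum_list (take k ys) \<and> 1 + sum_list (take k ys) < int T"
        using ins[of "Suc k"] ly zs zs2 by simp
    qed
    have v: "0 < 1 + sum_list ys \<and> 1 + sum_list ys < int T"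
      using ok unfolding inside_walk_def by (metis order_refl take_all)
    have "sum_list xs = 1 + sum_list ys + s" using zs zs2 by simp
    then have "1 + sum_list ys + s = 0 \<or> 1 + sum_list ys + s = int T"
      using v s xs(3) T zdvd_imp_le by fastforce
    then show "xs \<in> ?R"
      using s v ok ly ysl unfolding zs zs2 inside_walks_def by auto
  qed
next
  show "?R \<subseteq> ?L"
  proof
    fix xs assume "xs \<in> ?R"
    then obtain ys s where ys: "ys \<in> lists {-1,1}" "length ys = m" "inside_walk (int T) 1 ys"
      and xs: "xs = 1 # ys @ [s]"
      and c: "(s = -1 \<and> 1 + sum_list ys = 1) \<or> (s = 1 \<and> 1 + sum_list ys = int T - 1)"
      unfolding inside_walks_def by auto
    have "\<not> int T dvd sum_list (take k xs)" if k: "0 < k" "k < m+2" for k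
    proof -
      obtain k' where k': "k = Suc k'" using k by (cases k) auto
      have "0 < 1 + sum_list (take k' ys) \<and> 1 + sum_list (take k' ys) < int T"
        using ys(3) k k' ys(2) unfolding inside_walk_def by simp
      then show ?thesis using k k' ys(2) xs not_dvd_inside by simp
    qed
    moreover have "int T dvd sum_list xs" using c xs by auto
    ultimately show "xs \<in> ?L" using xs ys c unfolding first_hit_paths_def by auto
  qed
qed

text \<open>Together with the reflected paths, which start downwards.\<close>
lemma card_first_hit_paths:
  assumes T: "T \<ge> 4"
  shows "card (first_hit_paths T (m+2)) = 2 * exit_walks (int T) m"
proof -
  let ?F = "first_hit_paths T (m+2)"
  let ?Fp = "{xs \<in> ?F. hd xs = 1}"
  have card_up: "card ?Fp = exit_walks (int T) m"
  proof -
    have "card ?Fp = card ((\<lambda>ys. 1 # ys @ [-1]) ` inside_walks (int T) m 1 1)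
        + card ((\<lambda>ys. 1 # ys @ [1::int]) ` inside_walks (int T) m 1 (int T - 1))"
      unfolding first_hit_paths_up[OF T] by (rule card_Un_disjoint) (auto simp: finite_inside_walks)
    also have "\<dots> = exit_walks (int T) m"
      unfolding exit_walks_def nwalks_def by (subst card_image, simp add: inj_on_def)+ simp
    finally show ?thesis .
  qed
  have fin: "finite ?Fp" unfolding first_hit_paths_up[OF T] by (simp add: finite_inside_walks)
  have split: "?F = ?Fp \<union> map uminus ` ?Fp"
  proof
    show "?F \<subseteq> ?Fp \<union> map uminus ` ?Fp"
    proof
      fix xs assume xs: "xs \<in> ?F"
      then have l: "xs \<in> lists {-1,1}" "xs \<noteq> []" by (auto simp: first_hit_paths_def)
      then have "hd xs = 1 \<or> hd xs = -1" by (cases xs) auto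
      moreover have "xs \<in> map uminus ` ?Fp" if h: "hd xs = -1"
      proof -
        have "map uminus xs \<in> ?Fp" using first_hit_paths_uminus[OF xs] h l(2) by (cases xs) auto
        moreover have "xs = map uminus (map uminus xs)" by simp
        ultimately show ?thesis by blast
      qed
      ultimately show "xs \<in> ?Fp \<union> map uminus ` ?Fp" using xs by blast
    qed
  qed (use first_hit_paths_uminus in blast)
  have disj: "?Fp \<inter> map uminus ` ?Fp = {}"
  proof -
    { fix xs assume "xs \<in> ?Fp" "xs \<in> map uminus ` ?Fp"
      then obtain ys where "ys \<in> ?Fp" "xs = map uminus ys" by blast
      then have "hd xs = -1" by (cases ys) (auto simp: first_hit_paths_def)
      then have False using \<open>xs \<in> ?Fp\<close> by simp }
    then show ?thesis by blast
  qed
  have "card ?F = card ?Fp + card (map uminus ` ?Fp)"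
    by (subst split, rule card_Un_disjoint) (use fin disj in auto)
  also have "card (map uminus ` ?Fp) = card ?Fp"
    by (rule card_image) (simp add: inj_on_def)
  finally show ?thesis using card_up by simp
qed


section \<open>The hitting law q_T\<close>

lemma q_nonneg: "q T n \<ge> 0"
  by (simp add: q_def)

lemma q_short: "T \<ge> 2 \<Longrightarrow> n < 2 \<Longrightarrow> q T n = 0"
  by (simp add: q_def first_hit_paths_short)

lemma q_exit_walks: "T \<ge> 4 \<Longrightarrow> q T (m+2) = real (exit_walks (int T) m) / 2^(m+1)"
  using card_first_hit_paths[of T m] by (simp add: q_def)

lemma q_odd:
  assumes "T \<ge> 4" "even T" "odd n" shows "q T n = 0"
proof (cases "n < 2")
  case True
  then show ?thesis using assms q_short by simp
next
  case False
  then obtain m where n: "n = m + 2" by (metis add.commute le_Suc_ex not_less)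
  have "odd (int m + 1 + 1)" "odd (int m + 1 + (int T - 1))" using assms(2,3) n by simp_all
  then have "exit_walks (int T) m = 0" unfolding exit_walks_def by (simp add: nwalks_parity)
  then show ?thesis using q_exit_walks[OF assms(1)] n by simp
qed

lemma q_even_step:
  assumes "T \<ge> 4" shows "q T (2*i + 4) \<le> q T (2*i + 2)"
proof -
  have "real (exit_walks (int T) (2*i+2)) \<le> 4 * real (exit_walks (int T) (2*i))"
    using exit_walks_step[of "int T" i] assms by simp
  then have "real (exit_walks (int T) (2*i+2)) / 2^(2*i+3) \<le> real (exit_walks (int T) (2*i)) / 2^(2*i+1)"
    by (simp add: field_simps power_add)
  moreover have "q T (2*i + 4) = real (exit_walks (int T) (2*i+2)) / 2^(2*i+3)"
    using q_exit_walks[OF assms, of "2*i+2"] by (simp add: numeral_eq_Suc)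
  moreover have "q T (2*i + 2) = real (exit_walks (int T) (2*i)) / 2^(2*i+1)"
    using q_exit_walks[OF assms, of "2*i"] by simp
  ultimately show ?thesis by simp
qed

lemma q_antimono:
  assumes "T \<ge> 4" "even T" "even r0" "2 \<le> r0" "r0 \<le> r"
  shows "q T r \<le> q T r0"
proof (cases "even r")
  case False
  then show ?thesis using q_odd[OF assms(1,2)] q_nonneg by simp
next
  case True
  obtain k k' where k: "r0 = 2*k" and k': "r = 2*k'" using assms(3) True by (auto elim!: evenE)
  define i where "i = k - 1"
  define d where "d = k' - k"
  have r0: "r0 = 2*i + 2" using k assms(4) unfolding i_def by simp
  have r: "r = r0 + 2*d" using k k' assms(5) unfolding d_def by simp
  have "q T (2*i + 2 + 2*d) \<le> q T (2*i + 2)" for d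
  proof (induction d)
    case (Suc d)
    have "q T (2*i + 2 + 2*Suc d) = q T (2*(i+d) + 4)" by (rule arg_cong[where f="q T"]) simp
    also have "\<dots> \<le> q T (2*(i+d) + 2)" by (rule q_even_step[OF assms(1)])
    also have "\<dots> = q T (2*i + 2 + 2*d)" by (rule arg_cong[where f="q T"]) simp
    finally show ?case using Suc.IH by simp
  qed simp
  then show ?thesis using r0 r by simp
qed

text \<open>The probability that the walk has not yet hit T*Z after j+1 steps.\<close>
definition survival :: "nat \<Rightarrow> nat \<Rightarrow> real" where
  "survival T j = real (survivors (int T) j) / 2^j"

lemma survival_nonneg: "survival T j \<ge> 0"
  by (simp add: survival_def)

lemma survival_0: "T \<ge> 4 \<Longrightarrow> survival T 0 = 1"
  by (simp add: survival_def survivors_0)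

lemma q_survival_diff: "T \<ge> 4 \<Longrightarrow> q T (j+2) = survival T j - survival T (Suc j)"
proof -
  assume T: "T \<ge> 4"
  have "survivors (int T) (Suc j) + exit_walks (int T) j = 2 * survivors (int T) j"
    by (rule survivors_Suc) (use T in simp)
  then have "real (survivors (int T) (Suc j)) + real (exit_walks (int T) j)
      = 2 * real (survivors (int T) j)"
    by (metis of_nat_add of_nat_mult of_nat_numeral)
  then show ?thesis unfolding survival_def q_exit_walks[OF T] by (simp add: field_simps)
qed

lemma survival_antimono: assumes "T \<ge> 4" "j \<le> k" shows "survival T k \<le> survival T j"
  using assms(2)
proof (induction k rule: dec_induct)
  case (step k)
  then show ?case using q_survival_diff[OF assms(1), of k] q_nonneg[of T "k+2"] by simp
qed simp

lemma q_partial_sum: "T \<ge> 4 \<Longrightarrow> (\<Sum>n<N+2. q T n) = 1 - survival T N"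
proof (induction N)
  case 0
  then show ?case by (simp add: q_short survival_0 numeral_2_eq_2)
next
  case (Suc N)
  then show ?case using q_survival_diff[of T N] by simp
qed

lemma q_summable: assumes "T \<ge> 4" shows "summable (q T)"
proof (rule summableI_nonneg_bounded[where x=1])
  fix N
  have "(\<Sum>n<N. q T n) \<le> (\<Sum>n<N+2. q T n)" by (rule sum_mono2) (auto simp: q_nonneg)
  then show "(\<Sum>n<N. q T n) \<le> 1" using q_partial_sum[OF assms, of N] survival_nonneg[of T N] by simp
qed (rule q_nonneg)

lemma survival_sq_le: assumes "T \<ge> 4" shows "(survival T j)^2 \<le> 2 * real (j+1) * q T (2*j+2)"
proof -
  have CS: "real (survivors (int T) j)^2 \<le> real (j+1) * real (exit_walks (int T) (2*j))"
  proof -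
    have "real (nwalks (int T) (2*j) 1 1) \<le> real (exit_walks (int T) (2*j))"
      unfolding exit_walks_def by simp
    then show ?thesis using survivors_sq_le[of "int T" j] by (meson mult_left_mono of_nat_0_le_iff order_trans)
  qed
  have "(survival T j)^2 = real (survivors (int T) j)^2 / 4^j"
  proof -
    have "((2::real)^j)^2 = 4^j"
      by (metis power_mult mult.commute power2_eq_square num_double numeral_times_numeral)
    then show ?thesis by (simp add: survival_def power_divide)
  qed
  also have "\<dots> \<le> real (j+1) * real (exit_walks (int T) (2*j)) / 4^j"
    using CS by (simp add: divide_right_mono)
  also have "\<dots> = 2 * real (j+1) * q T (2*j+2)"
  proof -
    have "q T (2*j+2) = real (exit_walks (int T) (2*j)) / (2 * 4^j)"
      using q_exit_walks[OF assms, of "2*j"] by (simp add: power_mult)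
    then show ?thesis by (simp add: field_simps)
  qed
  finally show ?thesis .
qed

text \<open>Summing the Cauchy-Schwarz bound over j < J: the survival probability after J
  steps is O(1/sqrt(log J)), uniformly in T.\<close>
lemma survival_sq_harm_le: assumes "T \<ge> 4" shows "(survival T J)^2 * harm J \<le> 2"
proof -
  have "(survival T J)^2 * harm J = (\<Sum>j<J. (survival T J)^2 / real (Suc j))"
    by (simp add: harm_altdef sum_distrib_left field_simps)
  also have "\<dots> \<le> (\<Sum>j<J. 2 * q T (2*j+2))"
  proof (rule sum_mono)
    fix j assume "j \<in> {..<J}"
    then have "(survival T J)^2 \<le> (survival T j)^2"
      using survival_antimono[OF assms] survival_nonneg by (simp add: power_mono)
    also have "\<dots> \<le> 2 * real (j+1) * q T (2*j+2)" by (rule survival_sq_le[OF assms])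
    finally show "(survival T J)^2 / real (Suc j) \<le> 2 * q T (2*j+2)" by (simp add: field_simps)
  qed
  also have "\<dots> = 2 * (\<Sum>n\<in>(\<lambda>j. 2*j+2) ` {..<J}. q T n)"
    by (simp add: sum_distrib_left sum.reindex inj_on_def)
  also have "\<dots> \<le> 2 * (\<Sum>n<2*J+2. q T n)"
    by (intro mult_left_mono sum_mono2) (auto simp: q_nonneg)
  also have "\<dots> \<le> 2" using q_partial_sum[OF assms, of "2*J"] survival_nonneg[of T "2*J"] by simp
  finally show ?thesis .
qed


section \<open>A lower bound on phi that is uniform in T\<close>

text \<open>The Laplace transform of q_T is strictly decreasing, since q_T(2) > 0.\<close>
lemma laplace_q_strict_mono:
  assumes T: "T \<ge> 4" and ab: "a < b"
    and sa: "summable (\<lambda>n. q T n * exp (- a * real n))"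
    and sb: "summable (\<lambda>n. q T n * exp (- b * real n))"
  shows "(\<Sum>n. q T n * exp (- b * real n)) < (\<Sum>n. q T n * exp (- a * real n))"
proof -
  have "0 < (\<Sum>n. q T n * exp (- a * real n) - q T n * exp (- b * real n))"
  proof (rule suminf_pos2[where i=2])
    show "summable (\<lambda>n. q T n * exp (- a * real n) - q T n * exp (- b * real n))"
      using sa sb by (rule summable_diff)
  next
    fix n
    have "exp (- b * real n) \<le> exp (- a * real n)" using ab by (simp add: mult_right_mono)
    then show "0 \<le> q T n * exp (- a * real n) - q T n * exp (- b * real n)"
      using q_nonneg[of T n] by (simp add: mult_left_mono)
  next
    have "q T 2 > 0"
      using q_exit_walks[OF T, of 0] T by (simp add: exit_walks_def nwalks_0 numeral_2_eq_2)
    then show "0 < q T 2 * exp (- a * real 2) - q T 2 * exp (- b * real 2)"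
      using ab by simp
  qed
  also have "\<dots> = (\<Sum>n. q T n * exp (- a * real n)) - (\<Sum>n. q T n * exp (- b * real n))"
    by (rule suminf_diff[OF sa sb, symmetric])
  finally show ?thesis by simp
qed

text \<open>If the generating function of q_T at exp(-l0) is at least exp(-delta), the root
  phi(delta,T) exists (intermediate value theorem) and is at least l0.\<close>
lemma phi_ge:
  assumes T: "T \<ge> 4" and l0: "l0 > 0"
    and big: "exp (- \<delta>) \<le> (\<Sum>n. q T n * exp (- l0) ^ n)"
  shows "l0 \<le> phi \<delta> T"
proof -
  let ?H = "\<lambda>z. \<Sum>n. q T n * z ^ n"
  have x: "0 < exp (- l0)" "exp (- l0) < 1" using l0 by auto
  have H0: "?H 0 = 0"
  proof -
    have "(\<lambda>n. q T n * (0::real) ^ n) = (\<lambda>n. 0)"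
      using q_short[of T 0] T by (auto simp: fun_eq_iff power_0_left)
    then show ?thesis by simp
  qed
  have cont: "\<forall>z. 0 \<le> z \<and> z \<le> exp (- l0) \<longrightarrow> isCont ?H z"
  proof (intro allI impI)
    fix z :: real assume z: "0 \<le> z \<and> z \<le> exp (- l0)"
    then have "z < 1" using x(2) by linarith
    then have "norm z < 1" using z by simp
    have "summable (\<lambda>n. q T n * 1 ^ n)" using q_summable[OF T] by simp
    then show "isCont ?H z" by (rule isCont_powser) (use \<open>norm z < 1\<close> in simp)
  qed
  obtain z where z: "0 \<le> z" "z \<le> exp (- l0)" "?H z = exp (- \<delta>)"
    using IVT[of ?H 0 "exp (- \<delta>)" "exp (- l0)"] H0 big cont x by auto
  have zpos: "z > 0" using z H0 by (cases "z = 0") auto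
  have z1: "z \<le> 1" using z(2) x(2) by linarith
  define l where "l = - ln z"
  have el: "exp (- l * real n) = z ^ n" for n
  proof -
    have "exp (real n * ln z) = exp (ln z) ^ n" by (rule exp_of_nat_mult)
    then show ?thesis unfolding l_def using zpos by (simp add: mult.commute)
  qed
  have sl: "summable (\<lambda>n. q T n * exp (- l * real n))"
    unfolding el
  proof (rule summable_comparison_test'[OF q_summable[OF T]])
    fix n :: nat
    have "z ^ n \<le> 1" using zpos z1 by (simp add: power_le_one)
    then show "norm (q T n * z ^ n) \<le> q T n"
      using q_nonneg[of T n] zpos by (simp add: abs_mult mult_left_le)
  qed
  have root: "(\<Sum>n. q T n * exp (- l * real n)) = exp (- \<delta>)" unfolding el using z by simp
  have "phi \<delta> T = l"
    unfolding phi_def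
  proof (rule the_equality)
    fix l' assume l': "summable (\<lambda>n. q T n * exp (- l' * real n))
                     \<and> (\<Sum>n. q T n * exp (- l' * real n)) = exp (- \<delta>)"
    show "l' = l"
      using laplace_q_strict_mono[OF T, of l l'] laplace_q_strict_mono[OF T, of l' l] l' sl root
      by (cases l l' rule: linorder_cases) auto
  qed (use sl root in simp)
  moreover have "ln z \<le> - l0" using z zpos by (metis ln_exp ln_le_cancel_iff x(1))
  ultimately show ?thesis unfolding l_def by simp
qed

text \<open>Since the survival probability after J steps is small uniformly in T, the mass
  of q_T on [0, J+2) is at least exp(-delta/2); discounting by exp(-l0 n) with
  l0 = delta/(2(J+2)) keeps the generating function above exp(-delta).\<close>
lemma phi_uniform_lower_bound:
  assumes d: "\<delta> > 0"
  shows "\<exists>l0>0. \<forall>T\<ge>4. l0 \<le> phi \<delta> T"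
proof -
  define \<epsilon> where "\<epsilon> = 1 - exp (- \<delta> / 2)"
  have ep: "0 < \<epsilon>" unfolding \<epsilon>_def using d by auto
  obtain J where J: "harm J \<ge> 2 / \<epsilon>^2"
    using filterlim_at_top[THEN iffD1, OF harm_at_top, rule_format, of "2 / \<epsilon>^2"]
    by (auto simp: eventually_at_top_linorder)
  define l0 where "l0 = \<delta> / (2 * real (J + 2))"
  have l0: "l0 > 0" unfolding l0_def using d by simp
  have "l0 \<le> phi \<delta> T" if T: "T \<ge> 4" for T
  proof (rule phi_ge[OF T l0])
    have harm_pos: "harm J > (0::real)" using J ep by (smt (verit) divide_pos_pos zero_less_power)
    have "2 \<le> \<epsilon>^2 * harm J" using J ep by (simp add: field_simps)
    then have "(survival T J)^2 * harm J \<le> \<epsilon>^2 * harm J"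
      using survival_sq_harm_le[OF T, of J] by linarith
    then have "(survival T J)^2 \<le> \<epsilon>^2" using harm_pos by simp
    then have "survival T J \<le> \<epsilon>" using ep survival_nonneg[of T J] by (simp add: power_mono_iff)
    then have mass: "exp (- \<delta> / 2) \<le> (\<Sum>n<J+2. q T n)"
      using q_partial_sum[OF T, of J] unfolding \<epsilon>_def by simp
    have x: "exp (- l0) ^ (J+2) = exp (- \<delta> / 2)"
      unfolding l0_def exp_of_nat_mult[symmetric] by (simp add: field_simps)
    have sm: "summable (\<lambda>n. q T n * exp (- l0) ^ n)"
    proof (rule summable_comparison_test'[OF q_summable[OF T]])
      fix n :: nat
      have "exp (- l0) ^ n \<le> 1" using l0 by (simp add: power_le_one)
      then show "norm (q T n * exp (- l0) ^ n) \<le> q T n"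
        using q_nonneg[of T n] by (simp add: abs_mult mult_left_le)
    qed
    have "exp (- \<delta>) = exp (- \<delta> / 2) * exp (- l0) ^ (J+2)" unfolding x by (simp flip: exp_add)
    also have "\<dots> \<le> (\<Sum>n<J+2. q T n) * exp (- l0) ^ (J+2)" using mass by simp
    also have "\<dots> \<le> (\<Sum>n<J+2. q T n * exp (- l0) ^ n)"
      unfolding sum_distrib_right
      by (intro sum_mono mult_left_mono power_decreasing) (use l0 q_nonneg in auto)
    also have "\<dots> \<le> (\<Sum>n. q T n * exp (- l0) ^ n)"
      by (rule sum_le_suminf[OF sm]) (auto simp: q_nonneg)
    finally show "exp (- \<delta>) \<le> (\<Sum>n. q T n * exp (- l0) ^ n)" .
  qed
  then show ?thesis using l0 by blast
qed


section \<open>Geometric tails of K\<close>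

lemma infsum_tail_le_geometric:
  fixes f :: "nat \<Rightarrow> real" and C x :: real
  assumes f: "\<And>r. 0 \<le> f r" "\<And>r. m \<le> r \<Longrightarrow> f r \<le> C * x ^ r" and x: "0 < x" "x < 1"
  shows "infsum f {r. m \<le> r} \<le> C * x ^ m / (1 - x)"
proof -
  have "0 \<le> C * x ^ m" using f[of m] by fastforce
  then have C: "C \<ge> 0" using x by (smt (verit) zero_le_mult_iff zero_less_power)
  have "(\<lambda>k. C * x ^ m * x ^ k) sums (C * x ^ m * (1 / (1 - x)))"
    by (intro sums_mult geometric_sums) (use x in simp)
  then have "((\<lambda>k. C * x ^ m * x ^ k) has_sum (C * x ^ m / (1 - x))) UNIV"
    by (intro sums_nonneg_imp_has_sum) (use x C in simp_all)
  then have "(((\<lambda>r. C * x ^ r) \<circ> (\<lambda>k. k + m)) has_sum (C * x ^ m / (1 - x))) UNIV"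
    by (simp add: o_def power_add mult_ac)
  moreover have "{r. m \<le> r} = (\<lambda>k. k + m) ` UNIV"
  proof (rule set_eqI, rule iffI)
    fix r assume "r \<in> {r. m \<le> r}"
    then have "r = (r - m) + m" by simp
    then show "r \<in> (\<lambda>k. k + m) ` UNIV" by blast
  qed auto
  ultimately have hs: "((\<lambda>r. C * x ^ r) has_sum (C * x ^ m / (1 - x))) {r. m \<le> r}"
    by (simp add: has_sum_reindex inj_on_def)
  have "f summable_on {r. m \<le> r}"
    by (rule summable_on_comparison_test[OF has_sum_imp_summable[OF hs]]) (use f in auto)
  then have "infsum f {r. m \<le> r} \<le> infsum (\<lambda>r. C * x ^ r) {r. m \<le> r}"
    by (rule infsum_mono[OF _ has_sum_imp_summable[OF hs]]) (use f in auto)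
  also have "\<dots> = C * x ^ m / (1 - x)" using hs by (rule infsumI)
  finally show ?thesis .
qed

text \<open>The tail of K beyond t + a is at most exp(-l(a-2))/(1-exp(-l)) times the mass of
  K on the window (t, t+a], for any 0 < l \<le> phi: compare with the geometric sequence
  started at the first even time r0 \<le> t+2 of the window.\<close>
lemma Kdist_tail_le_window:
  fixes t :: nat and a l :: real
  assumes T: "T \<ge> 4" "even T" and l: "0 < l" "l \<le> phi \<delta> T" and a: "2 \<le> a"
  shows "infsum (Kdist \<delta> T) {r. real t + a \<le> real r}
         \<le> exp (- l * (a - 2)) / (1 - exp (- l))
           * (\<Sum>r\<in>{r. t + 1 \<le> r \<and> real r \<le> real t + a}. Kdist \<delta> T r)"
proof -
  define \<phi> where "\<phi> = phi \<delta> T"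
  define K where "K = Kdist \<delta> T"
  define W where "W = (\<Sum>r\<in>{r. t + 1 \<le> r \<and> real r \<le> real t + a}. K r)"
  have pow: "exp (- \<phi>) ^ n = exp (- \<phi> * real n)" for n
    by (simp add: exp_of_nat_mult[symmetric] mult.commute)
  have K: "K r = exp \<delta> * q T r * exp (- \<phi>) ^ r" for r
    unfolding K_def Kdist_def \<phi>_def[symmetric] by (simp add: pow)
  have K_nonneg: "K r \<ge> 0" for r unfolding K using q_nonneg[of T r] by simp
  define r0 where "r0 = (if even (t + 1) then t + 1 else t + 2)"
  have r0: "even r0" "2 \<le> r0" "t + 1 \<le> r0" "r0 \<le> t + 2" unfolding r0_def by (auto elim: oddE)
  define m where "m = t + nat \<lceil>a\<rceil>"
  have tail_set: "{r. real t + a \<le> real r} = {r. m \<le> r}"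
    unfolding m_def using a by auto linarith+
  have m: "real r0 + (a - 2) \<le> real m" using r0(4) a unfolding m_def by linarith
  have x: "0 < exp (- \<phi>)" "exp (- \<phi>) < 1" using l unfolding \<phi>_def by auto
  define C where "C = exp \<delta> * q T r0"
  have "infsum K {r. m \<le> r} \<le> C * exp (- \<phi>) ^ m / (1 - exp (- \<phi>))"
  proof (rule infsum_tail_le_geometric[OF K_nonneg _ x])
    fix r assume "m \<le> r"
    then have "real r0 \<le> real r" using m a by linarith
    then have "q T r \<le> q T r0" using q_antimono[OF T r0(1,2)] by simp
    then show "K r \<le> C * exp (- \<phi>) ^ r" unfolding K C_def by (simp add: mult_right_mono)
  qed
  also have "\<dots> \<le> K r0 * exp (- l * (a - 2)) / (1 - exp (- l))"
  proof (rule frac_le)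
    have "exp (- \<phi>) ^ m \<le> exp (- \<phi> * (real r0 + (a - 2)))"
      unfolding pow using m l unfolding \<phi>_def by simp
    also have "\<dots> = exp (- \<phi>) ^ r0 * exp (- \<phi> * (a - 2))"
      unfolding pow by (simp add: algebra_simps flip: exp_add)
    also have "\<dots> \<le> exp (- \<phi>) ^ r0 * exp (- l * (a - 2))"
      using l a unfolding \<phi>_def by (simp add: mult_right_mono)
    finally show "C * exp (- \<phi>) ^ m \<le> K r0 * exp (- l * (a - 2))"
      unfolding K C_def using q_nonneg[of T r0] by (simp add: mult_left_mono mult.assoc)
    show "1 - exp (- l) \<le> 1 - exp (- \<phi>)" using l unfolding \<phi>_def by simp
  qed (use l K_nonneg in simp_all)
  also have "\<dots> \<le> W * exp (- l * (a - 2)) / (1 - exp (- l))"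
  proof (intro divide_right_mono mult_right_mono)
    show "K r0 \<le> W" unfolding W_def
    proof (rule member_le_sum)
      have "real t + a \<le> real m" using tail_set by blast
      then have "{r. t + 1 \<le> r \<and> real r \<le> real t + a} \<subseteq> {..m}" by auto
      then show "finite {r. t + 1 \<le> r \<and> real r \<le> real t + a}" by (rule finite_subset) simp
    qed (use r0 a K_nonneg in auto)
  qed (use l in simp_all)
  finally show ?thesis unfolding K_def W_def tail_set by (simp add: mult.commute)
qed


lemma half_floor_sqrt_ge:
  assumes "A \<ge> 0" "(2 * A + 1)^2 \<le> real n"
  shows "A \<le> of_int \<lfloor>sqrt (real n)\<rfloor> / 2"
proof -
  have "2 * A + 1 \<le> sqrt (real n)" using assms real_le_rsqrt by simp
  then show ?thesis by linarith
qed

lemma tail_factor_small: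
  fixes l \<eta> :: real
  assumes l: "l > 0" and eta: "\<eta> > 0"
  shows "\<exists>A\<ge>2. \<forall>a\<ge>A. exp (- l * (a - 2)) / (1 - exp (- l)) \<le> \<eta>"
proof -
  define c where "c = \<eta> * (1 - exp (- l))"
  have d: "0 < 1 - exp (- l)" using l by simp
  then have c: "c > 0" unfolding c_def using eta by simp
  define A where "A = 2 + max 0 (- ln c / l)"
  have "exp (- l * (a - 2)) / (1 - exp (- l)) \<le> \<eta>" if a: "a \<ge> A" for a
  proof -
    have "- ln c \<le> l * (a - 2)"
      using mult_left_mono[of "- ln c / l" "a - 2" l] a l unfolding A_def by auto
    then have "exp (- l * (a - 2)) \<le> exp (ln c)" by simp
    then have "exp (- l * (a - 2)) \<le> \<eta> * (1 - exp (- l))" using c unfolding c_def by simp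
    then show ?thesis using d by (simp add: pos_divide_le_eq)
  qed
  moreover have "A \<ge> 2" unfolding A_def by simp
  ultimately show ?thesis by blast
qed

text \<open>The tail estimate holds eventually, for every starting time t.\<close>
lemma Kdist_tail_eventually:
  fixes T :: "nat \<Rightarrow> nat"
  assumes "\<delta> > 0" "\<And>N. even (T N)" "filterlim T at_top sequentially" "\<eta> > 0"
  shows "\<exists>N1. \<forall>N\<ge>N1. \<forall>t::nat.
           infsum (Kdist \<delta> (T N)) {r. real r \<ge> real t + of_int \<lfloor>sqrt (real (T N))\<rfloor> / 2}
           \<le> \<eta> * (\<Sum>r\<in>{r. t + 1 \<le> r \<and> real r \<le> real t + of_int \<lfloor>sqrt (real (T N))\<rfloor> / 2}.
                      Kdist \<delta> (T N) r)"
proof -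
  obtain l0 where l0: "l0 > 0" "\<And>T. T \<ge> 4 \<Longrightarrow> l0 \<le> phi \<delta> T"
    using phi_uniform_lower_bound[OF assms(1)] by blast
  obtain A where A: "A \<ge> 2" "\<And>a. a \<ge> A \<Longrightarrow> exp (- l0 * (a - 2)) / (1 - exp (- l0)) \<le> \<eta>"
    using tail_factor_small[OF l0(1) assms(4)] by blast
  obtain N1 where N1: "\<And>N. N \<ge> N1 \<Longrightarrow> (2 * A + 1)^2 \<le> real (T N)"
    using assms(3)[unfolded filterlim_at_top, rule_format, of "nat \<lceil>(2 * A + 1)^2\<rceil>"]
    by (auto simp: eventually_sequentially)
  have "infsum (Kdist \<delta> (T N)) {r. real r \<ge> real t + of_int \<lfloor>sqrt (real (T N))\<rfloor> / 2}
        \<le> \<eta> * (\<Sum>r\<in>{r. t + 1 \<le> r \<and> real r \<le> real t + of_int \<lfloor>sqrt (real (T N))\<rfloor> / 2}.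
                   Kdist \<delta> (T N) r)"
    if N: "N \<ge> N1" for N t
  proof -
    define a where "a = of_int \<lfloor>sqrt (real (T N))\<rfloor> / (2::real)"
    have "(4::real) \<le> (2 * A + 1)^2" using power_mono[of 2 "2 * A + 1" 2] A(1) by simp
    then have "4 \<le> real (T N)" using N1[OF N] by linarith
    then have T4: "T N \<ge> 4" by simp
    have "A \<le> a" unfolding a_def using half_floor_sqrt_ge[OF _ N1[OF N]] A(1) by simp
    have window_nonneg: "0 \<le> (\<Sum>r\<in>{r. t + 1 \<le> r \<and> real r \<le> real t + a}. Kdist \<delta> (T N) r)"
      by (intro sum_nonneg) (simp add: Kdist_def q_nonneg)
    show ?thesis
      unfolding a_def[symmetric]
      using Kdist_tail_le_window[OF T4 assms(2) l0(1) l0(2)[OF T4], of a t]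
        mult_right_mono[OF A(2)[OF \<open>A \<le> a\<close>] window_nonneg] A(1) \<open>A \<le> a\<close>
      by linarith
  qed
  then show ?thesis by blast
qed

theorem lemma9:
  fixes \<delta> :: real and T :: "nat \<Rightarrow> nat"
  assumes "\<delta> > 0"
    and "\<And>N. even (T N)"
    and "\<And>N. T N \<le> N"
    and "filterlim T at_top sequentially"
  shows "\<forall>\<eta>>0. \<exists>N1. \<forall>N\<ge>N1. \<forall>t::nat.
           real t \<le> real N - of_int \<lfloor>sqrt (real (T N))\<rfloor> \<longrightarrow>
             infsum (Kdist \<delta> (T N))
               {r. real r \<ge> real t + of_int \<lfloor>sqrt (real (T N))\<rfloor> / 2}
             \<le> \<eta> * (\<Sum>r\<in>{r. t + 1 \<le> r \<and> real r \<le> real t + of_int \<lfloor>sqrt (real (T N))\<rfloor> / 2}.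
                        Kdist \<delta> (T N) r)"
  using Kdist_tail_eventually[OF assms(1,2,4)] by blast

end
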